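(* Let $A$ be an $m \times m$ normal centrosymmetric nonnegative matrix with eigenvalues $\alpha_1, \alpha_2, \ldots, \alpha_m$, where $\alpha_1$ is the Perron root of $A$, and let $u_1$ be a unit nonnegative eigenvector of $A$ corresponding to $\alpha_1$ with $Ju_1 = u_1$. Let $B$ be an $n \times n$ normal centrosymmetric nonnegative matrix with eigenvalues $\beta_1, \beta_2, \ldots, \beta_n$, where $\beta_1$ is the Perron root of $B$, and let $v_1$ be a unit nonnegative eigenvector of $B$ corresponding to $\beta_1$ with $Jv_1 = v_1$. Let $\rho, \xi \geq 0$ and let $\gamma_1, \gamma_2, \gamma_3$ be the eigenvalues of $$\widehat{C} = \begin{bmatrix} \beta_1 & \rho & \xi \\ \rho & \alpha_1 & \rho \\ \xi & \rho & \beta_1 \end{bmatrix}.$$ Then the matrix $$C = \begin{bmatrix} B & \rho v_1 u_1^T & \xi v_1 v_1^T \\ \rho u_1 v_1^T & A & J\rho u_1 v_1^T J \\ \xi v_1 v_1^T & \rho v_1 u_1^T & B \end{bmatrix}$$ is a normal centrosymmetric nonnegative matrix with eigenvalues $\gamma_1, \gamma_2, \gamma_3, \alpha_2, \ldots, \alpha_m, \beta_2, \ldots, \beta_n, \beta_2, \ldots, \beta_n$.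
   Context: $J$ denotes the reverse identity matrix (ones on the anti-diagonal, zeros elsewhere) of whatever size is appropriate where it appears (in $J\rho u_1 v_1^T J$, the left $J$ is $m \times m$ and the right $J$ is $n \times n$). A square matrix $Q$ is centrosymmetric if $JQJ = Q$, nonnegative if all entries are nonnegative, and normal if $QQ^* = Q^*Q$. The Perron root of a nonnegative matrix is its spectral radius, which is an eigenvalue. *)

theory Defs
  imports "Jordan_Normal_Form.Spectral_Radius" "Jordan_Normal_Form.Schur_Decomposition"
begin

definition exch_mat :: "nat \<Rightarrow> 'a :: {zero,one} mat" where
  "exch_mat k = mat k k (\<lambda>(i,j). if i + j = k - 1 then 1 else 0)"

definition centrosymmetric :: "'a :: comm_ring_1 mat \<Rightarrow> bool" where
  "centrosymmetric Q \<longleftrightarrow> square_mat Q \<and>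
     exch_mat (dim_row Q) * Q * exch_mat (dim_row Q) = Q"

definition nonneg_mat :: "real mat \<Rightarrow> bool" where
  "nonneg_mat Q \<longleftrightarrow> (\<forall>i < dim_row Q. \<forall>j < dim_col Q. Q $$ (i,j) \<ge> 0)"

definition nonneg_vec :: "real vec \<Rightarrow> bool" where
  "nonneg_vec v \<longleftrightarrow> (\<forall>i < dim_vec v. v $ i \<ge> 0)"

definition normal_mat :: "'a :: conjugatable_field mat \<Rightarrow> bool" where
  "normal_mat Q \<longleftrightarrow> square_mat Q \<and> Q * mat_adjoint Q = mat_adjoint Q * Q"

definition outer :: "'a :: times vec \<Rightarrow> 'a vec \<Rightarrow> 'a mat" where
  "outer x y = mat (dim_vec x) (dim_vec y) (\<lambda>(i,j). x $ i * y $ j)"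

definition block3 :: "'a mat \<Rightarrow> 'a mat \<Rightarrow> 'a mat \<Rightarrow> 'a mat \<Rightarrow> 'a mat \<Rightarrow> 'a mat \<Rightarrow>
    'a mat \<Rightarrow> 'a mat \<Rightarrow> 'a mat \<Rightarrow> 'a mat" where
  "block3 M11 M12 M13 M21 M22 M23 M31 M32 M33 =
    (let r1 = dim_row M11; r2 = dim_row M22; r3 = dim_row M33;
         c1 = dim_col M11; c2 = dim_col M22; c3 = dim_col M33
     in mat (r1 + r2 + r3) (c1 + c2 + c3) (\<lambda>(i,j).
        if i < r1 then
          (if j < c1 then M11 $$ (i,j) else if j < c1 + c2 then M12 $$ (i, j - c1)
           else M13 $$ (i, j - c1 - c2))
        else if i < r1 + r2 then
          (if j < c1 then M21 $$ (i - r1, j) else if j < c1 + c2 then M22 $$ (i - r1, j - c1)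
           else M23 $$ (i - r1, j - c1 - c2))
        else
          (if j < c1 then M31 $$ (i - r1 - r2, j) else if j < c1 + c2 then M32 $$ (i - r1 - r2, j - c1)
           else M33 $$ (i - r1 - r2, j - c1 - c2))))"

(* the complex eigenvalues of a real square matrix, listed with algebraic multiplicity *)
definition has_eigenvalues :: "real mat \<Rightarrow> complex list \<Rightarrow> bool" where
  "has_eigenvalues Q ls \<longleftrightarrow> length ls = dim_row Q \<and>
     char_poly (map_mat complex_of_real Q) = (\<Prod>a\<leftarrow>ls. [:- a, 1:])"

definition perron_root :: "real mat \<Rightarrow> real" where
  "perron_root Q = spectral_radius (map_mat complex_of_real Q)"

end

(*
  Write C = D + U K U^T, where D = diag(B, A, B), the columns of U = diag(v, u, v) are orthonormal,
  and K is the off-diagonal part of C-hat, so that C-hat = L + K with L = diag(beta1, alpha1, beta1).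
  Since A and B are normal, their Perron vectors are also eigenvectors of A^T and B^T, hence
  D U = D^T U = U L; as U K U^T is symmetric, this makes C normal.  The matrix D - U L U^T
  annihilates U, and Sylvester's identity z^k det(zI - XY) = z^n det(zI - YX) then gives
  chi_C chi_L = chi_D chi_(L+K) = chi_B chi_A chi_B chi_(C-hat); cancelling
  chi_L = (z - beta1)(z - alpha1)(z - beta1) leaves the claimed spectrum.  Centrosymmetry and
  nonnegativity are checked blockwise, using J u = u and J v = v.
*)

theory Submission
  imports Defs
begin

section \<open>Characteristic polynomial of a low-rank update\<close>

lemma det_sylvester:
  fixes A :: "'a::idom mat"
  assumes A: "A \<in> carrier_mat n k" and B: "B \<in> carrier_mat k n"
  shows "z ^ k * det (z \<cdot>\<^sub>m 1\<^sub>m n - A * B) = z ^ n * det (z \<cdot>\<^sub>m 1\<^sub>m k - B * A)"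
proof -
  define M where "M = four_block_mat (z \<cdot>\<^sub>m 1\<^sub>m n) A B (1\<^sub>m k)"
  define P where "P = four_block_mat (1\<^sub>m n) (0\<^sub>m n k) (- B) (z \<cdot>\<^sub>m 1\<^sub>m k)"
  define Q where "Q = four_block_mat (1\<^sub>m n) (0\<^sub>m n k) (- B) (1\<^sub>m k)"
  have M: "M \<in> carrier_mat (n+k) (n+k)" and P: "P \<in> carrier_mat (n+k) (n+k)"
    and Q: "Q \<in> carrier_mat (n+k) (n+k)"
    unfolding M_def P_def Q_def using A B by auto
  have PM: "P * M = four_block_mat (z \<cdot>\<^sub>m 1\<^sub>m n) A (0\<^sub>m k n) (z \<cdot>\<^sub>m 1\<^sub>m k - B * A)"
    unfolding P_def M_def using A B
    by (subst mult_four_block_mat[of _ n n _ k _ k _ _ n _ k], auto intro!: cong_four_block_mat)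
  have MQ: "M * Q = four_block_mat (z \<cdot>\<^sub>m 1\<^sub>m n - A * B) A (0\<^sub>m k n) (1\<^sub>m k)"
    unfolding Q_def M_def using A B
    by (subst mult_four_block_mat[of _ n n _ k _ k _ _ n _ k], auto intro!: cong_four_block_mat)
  have "det P = z ^ k" "det Q = 1"
    unfolding P_def Q_def using B
    by (subst det_four_block_mat_upper_right_zero[of _ n _ k], auto)+
  moreover have "det P * det M = z ^ n * det (z \<cdot>\<^sub>m 1\<^sub>m k - B * A)"
    unfolding det_mult[OF P M, symmetric] PM using A B
    by (subst det_four_block_mat_lower_left_zero[of _ n _ k], auto)
  moreover have "det M * det Q = det (z \<cdot>\<^sub>m 1\<^sub>m n - A * B)"
    unfolding det_mult[OF M Q, symmetric] MQ using A B
    by (subst det_four_block_mat_lower_left_zero[of _ n _ k], auto)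
  ultimately show ?thesis by (simp add: mult.commute)
qed

lemma mult_smult_one_minus_annihilated:
  fixes D W :: "'a::comm_ring_1 mat"
  assumes D: "D \<in> carrier_mat N N" and W: "W \<in> carrier_mat N N" and DW: "D * W = 0\<^sub>m N N"
  shows "(z \<cdot>\<^sub>m 1\<^sub>m N - D) * (z \<cdot>\<^sub>m 1\<^sub>m N - W) = z \<cdot>\<^sub>m (z \<cdot>\<^sub>m 1\<^sub>m N - (D + W))"
proof -
  have zD: "z \<cdot>\<^sub>m 1\<^sub>m N - D \<in> carrier_mat N N" using D by auto
  have "(z \<cdot>\<^sub>m 1\<^sub>m N - D) * (z \<cdot>\<^sub>m 1\<^sub>m N - W)
      = (z \<cdot>\<^sub>m 1\<^sub>m N - D) * (z \<cdot>\<^sub>m 1\<^sub>m N) - (z \<cdot>\<^sub>m 1\<^sub>m N - D) * W"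
    by (rule mult_minus_distrib_mat[OF zD _ W]) simp
  also have "(z \<cdot>\<^sub>m 1\<^sub>m N - D) * (z \<cdot>\<^sub>m 1\<^sub>m N) = z \<cdot>\<^sub>m (z \<cdot>\<^sub>m 1\<^sub>m N - D)"
    using mult_smult_distrib[OF zD one_carrier_mat] right_mult_one_mat[OF zD] by simp
  also have "(z \<cdot>\<^sub>m 1\<^sub>m N - D) * W = z \<cdot>\<^sub>m W"
    unfolding minus_mult_distrib_mat[OF smult_carrier_mat[OF one_carrier_mat] D W]
      mult_smult_assoc_mat[OF one_carrier_mat W] DW
    using W by (intro eq_matI) auto
  also have "z \<cdot>\<^sub>m (z \<cdot>\<^sub>m 1\<^sub>m N - D) - z \<cdot>\<^sub>m W = z \<cdot>\<^sub>m (z \<cdot>\<^sub>m 1\<^sub>m N - (D + W))"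
    using D W by (intro eq_matI) (auto simp: algebra_simps)
  finally show ?thesis .
qed

lemma det_annihilated_update:
  fixes D U X :: "'a::idom mat"
  assumes D: "D \<in> carrier_mat N N" and U: "U \<in> carrier_mat N k" and X: "X \<in> carrier_mat k k"
    and DU: "D * U = 0\<^sub>m N k" and UU: "transpose_mat U * U = 1\<^sub>m k"
  shows "z ^ k * (z ^ N * det (z \<cdot>\<^sub>m 1\<^sub>m N - (D + U * X * transpose_mat U)))
       = z ^ N * (det (z \<cdot>\<^sub>m 1\<^sub>m N - D) * det (z \<cdot>\<^sub>m 1\<^sub>m k - X))"
proof -
  define W where "W = U * X * transpose_mat U"
  have W: "W \<in> carrier_mat N N" unfolding W_def using U X by auto
  have XUt: "X * transpose_mat U \<in> carrier_mat k N" using U X by auto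
  have "D * W = D * U * (X * transpose_mat U)"
    unfolding W_def using D U X XUt by (simp add: assoc_mult_mat[OF D U XUt])
  then have DW: "D * W = 0\<^sub>m N N" unfolding DU using U X by simp
  have "det (z \<cdot>\<^sub>m 1\<^sub>m N - D) * det (z \<cdot>\<^sub>m 1\<^sub>m N - W) = z ^ N * det (z \<cdot>\<^sub>m 1\<^sub>m N - (D + W))"
    using det_mult[OF minus_carrier_mat[OF D] minus_carrier_mat[OF W], of "z \<cdot>\<^sub>m 1\<^sub>m N" "z \<cdot>\<^sub>m 1\<^sub>m N"]
    unfolding mult_smult_one_minus_annihilated[OF D W DW] using D W by simp
  moreover have "z ^ k * det (z \<cdot>\<^sub>m 1\<^sub>m N - W) = z ^ N * det (z \<cdot>\<^sub>m 1\<^sub>m k - X)"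
  proof -
    have "X * transpose_mat U * U = X" using U X UU by (simp add: assoc_mult_mat[of _ k k _ N])
    then show ?thesis
      using det_sylvester[of U N k "X * transpose_mat U" z] U X unfolding W_def
      by (simp add: assoc_mult_mat[of _ N k _ k])
  qed
  ultimately show ?thesis unfolding W_def by (metis mult.left_commute)
qed

interpretation const_poly_hom: comm_ring_hom "\<lambda>x::'a::comm_ring_1. [:x:]"
  by unfold_locales (auto simp: one_pCons)

lemma char_poly_as_det:
  fixes A :: "'a::comm_ring_1 mat"
  assumes "A \<in> carrier_mat n n"
  shows "char_poly A = det ([:0, 1:] \<cdot>\<^sub>m 1\<^sub>m n - map_mat (\<lambda>a. [:a:]) A)"
proof -
  have "[:0, 1:] \<cdot>\<^sub>m 1\<^sub>m n - map_mat (\<lambda>a. [:a:]) A = char_poly_matrix A"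
    using assms by (intro eq_matI) (auto simp: char_poly_matrix_def)
  then show ?thesis unfolding char_poly_def by simp
qed

lemma char_poly_annihilated_update:
  fixes D U X :: "'a::idom mat"
  assumes D: "D \<in> carrier_mat N N" and U: "U \<in> carrier_mat N k" and X: "X \<in> carrier_mat k k"
    and DU: "D * U = 0\<^sub>m N k" and UU: "transpose_mat U * U = 1\<^sub>m k"
  shows "[:0, 1:] ^ k * char_poly (D + U * X * transpose_mat U) = char_poly D * char_poly X"
proof -
  define h :: "'a mat \<Rightarrow> 'a poly mat" where "h = map_mat (\<lambda>a. [:a:])"
  have hUt: "h (transpose_mat U) = transpose_mat (h U)" unfolding h_def by (rule map_mat_transpose[symmetric])
  have hDU: "h D * h U = 0\<^sub>m N k"
    unfolding h_def const_poly_hom.mat_hom_mult[OF D U, symmetric] DU by (intro eq_matI) auto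
  have hUU: "transpose_mat (h U) * h U = 1\<^sub>m k"
    unfolding hUt[symmetric] unfolding h_def
    unfolding const_poly_hom.mat_hom_mult[OF transpose_carrier_mat[THEN iffD2, OF U] U, symmetric] UU
    by (rule const_poly_hom.mat_hom_one)
  have "h (D + U * X * transpose_mat U) = h D + h (U * X * transpose_mat U)"
    unfolding h_def using D U X by (intro eq_matI) auto
  also have "h (U * X * transpose_mat U) = h U * h X * transpose_mat (h U)"
    unfolding hUt[symmetric] unfolding h_def
    unfolding const_poly_hom.mat_hom_mult[OF mult_carrier_mat[OF U X] transpose_carrier_mat[THEN iffD2, OF U]]
      const_poly_hom.mat_hom_mult[OF U X] ..
  finally have hsum: "h (D + U * X * transpose_mat U) = h D + h U * h X * transpose_mat (h U)" .
  have hD: "h D \<in> carrier_mat N N" and hU: "h U \<in> carrier_mat N k" and hX: "h X \<in> carrier_mat k k"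
    unfolding h_def using D U X by auto
  have "char_poly (D + U * X * transpose_mat U) = det ([:0, 1:] \<cdot>\<^sub>m 1\<^sub>m N - (h D + h U * h X * transpose_mat (h U)))"
    unfolding hsum[symmetric] unfolding h_def using D U X by (intro char_poly_as_det) auto
  moreover have "char_poly D = det ([:0, 1:] \<cdot>\<^sub>m 1\<^sub>m N - h D)"
    unfolding h_def by (rule char_poly_as_det[OF D])
  moreover have "char_poly X = det ([:0, 1:] \<cdot>\<^sub>m 1\<^sub>m k - h X)"
    unfolding h_def by (rule char_poly_as_det[OF X])
  ultimately have "[:0, 1:] ^ N * ([:0, 1:] ^ k * char_poly (D + U * X * transpose_mat U))
      = [:0, 1:] ^ N * (char_poly D * char_poly X)"
    using det_annihilated_update[OF hD hU hX hDU hUU, of "[:0, 1:]"] by (simp add: mult.left_commute)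
  then show ?thesis by simp
qed

lemma char_poly_low_rank_update:
  fixes D U L K :: "'a::idom mat"
  assumes D: "D \<in> carrier_mat N N" and U: "U \<in> carrier_mat N k"
    and L: "L \<in> carrier_mat k k" and K: "K \<in> carrier_mat k k"
    and DU: "D * U = U * L" and UU: "transpose_mat U * U = 1\<^sub>m k"
  shows "char_poly (D + U * K * transpose_mat U) * char_poly L = char_poly D * char_poly (L + K)"
proof -
  have Ut: "transpose_mat U \<in> carrier_mat k N" using U by auto
  \<comment> \<open>\<open>D - P\<close> annihilates \<open>U\<close>, so both updates below decouple\<close>
  define P where "P = U * L * transpose_mat U"
  define Q where "Q = U * K * transpose_mat U"
  have P: "P \<in> carrier_mat N N" and Q: "Q \<in> carrier_mat N N"
    unfolding P_def Q_def using U L K by auto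
  have "D * U - P * U = U * L - U * L * (transpose_mat U * U)"
    unfolding P_def DU using assoc_mult_mat[OF mult_carrier_mat[OF U L] Ut U] by simp
  then have D'U: "(D - P) * U = 0\<^sub>m N k"
    unfolding minus_mult_distrib_mat[OF D P U] UU using U L by simp
  have "U * (L + K) * transpose_mat U = P + Q"
    unfolding P_def Q_def mult_add_distrib_mat[OF U L K]
    by (rule add_mult_distrib_mat[OF mult_carrier_mat[OF U L] mult_carrier_mat[OF U K] Ut])
  then have "(D - P) + U * (L + K) * transpose_mat U = D + Q"
    using D P Q by (intro eq_matI) auto
  moreover have "(D - P) + U * L * transpose_mat U = D"
    unfolding P_def[symmetric] using D P by (intro eq_matI) auto
  ultimately have "[:0, 1:] ^ k * char_poly (D + Q) = char_poly (D - P) * char_poly (L + K)"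
    and "[:0, 1:] ^ k * char_poly D = char_poly (D - P) * char_poly L"
    using char_poly_annihilated_update[OF minus_carrier_mat[OF P] U add_carrier_mat[OF K, of L] D'U UU]
      char_poly_annihilated_update[OF minus_carrier_mat[OF P] U L D'U UU] by simp_all
  then have "[:0, 1:] ^ k * (char_poly (D + Q) * char_poly L) = [:0, 1:] ^ k * (char_poly D * char_poly (L + K))"
    by (simp only: mult.assoc[symmetric]) (simp only: ac_simps)
  then show ?thesis unfolding Q_def by simp
qed

section \<open>Real normal matrices\<close>

lemma normal_mat_real_iff:
  "normal_mat (Q :: real mat) \<longleftrightarrow> square_mat Q \<and> Q * transpose_mat Q = transpose_mat Q * Q"
proof -
  have "mat_adjoint Q = transpose_mat Q"
    unfolding mat_adjoint_def by (intro eq_matI) (auto simp: mat_of_rows_index)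
  then show ?thesis unfolding normal_mat_def by simp
qed

lemma normal_transpose_eigenvector:
  fixes A :: "real mat"
  assumes A: "A \<in> carrier_mat n n" and normal: "A * transpose_mat A = transpose_mat A * A"
    and u: "u \<in> carrier_vec n" and Au: "A *\<^sub>v u = a \<cdot>\<^sub>v u"
  shows "transpose_mat A *\<^sub>v u = a \<cdot>\<^sub>v u"
proof -
  define y where "y = transpose_mat A *\<^sub>v u"
  have At: "transpose_mat A \<in> carrier_mat n n" using A by auto
  have y: "y \<in> carrier_vec n" unfolding y_def using A u by auto
  have "y \<bullet> y = u \<bullet> ((A * transpose_mat A) *\<^sub>v u)"
    unfolding y_def using transpose_vec_mult_scalar[OF A y u] A At u y_def by simp
  also have "\<dots> = u \<bullet> (transpose_mat A *\<^sub>v (A *\<^sub>v u))" unfolding normal using A At u by simp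
  also have "\<dots> = (A *\<^sub>v u) \<bullet> (A *\<^sub>v u)"
    using transpose_vec_mult_scalar[OF At _ u, of "A *\<^sub>v u"] A u by (simp add: comm_scalar_prod[of _ n])
  finally have yy: "y \<bullet> y = a * a * (u \<bullet> u)" unfolding Au using u by simp
  have yu: "y \<bullet> u = a * (u \<bullet> u)"
    unfolding y_def transpose_vec_mult_scalar[OF A u u] Au using u by simp
  have "(y - a \<cdot>\<^sub>v u) \<bullet> (y - a \<cdot>\<^sub>v u) = y \<bullet> y - 2 * a * (y \<bullet> u) + a * a * (u \<bullet> u)"
    using y u comm_scalar_prod[OF u y]
    by (simp add: scalar_prod_def sum_subtractf sum.distrib sum_distrib_left algebra_simps)
  then have "(y - a \<cdot>\<^sub>v u) \<bullet> (y - a \<cdot>\<^sub>v u) = 0" unfolding yy yu by simp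
  \<comment> \<open>on real vectors \<open>\<bullet>c\<close> is \<open>\<bullet>\<close>\<close>
  then have "y - a \<cdot>\<^sub>v u = 0\<^sub>v n"
    using conjugate_square_eq_0_vec[of "y - a \<cdot>\<^sub>v u" n] y u by simp
  then have "(y - a \<cdot>\<^sub>v u) $ i = 0" if "i < n" for i
    using that by simp
  then have "y $ i = a * u $ i" if "i < n" for i
    using that y u by force
  then show ?thesis unfolding y_def[symmetric] using y u by (intro eq_vecI) auto
qed

lemma normal_low_rank_update:
  fixes D U L K :: "real mat"
  assumes D: "D \<in> carrier_mat N N" and U: "U \<in> carrier_mat N k"
    and L: "L \<in> carrier_mat k k" and K: "K \<in> carrier_mat k k"
    and normal: "D * transpose_mat D = transpose_mat D * D"
    and DU: "D * U = U * L" and DtU: "transpose_mat D * U = U * L"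
    and K_sym: "transpose_mat K = K"
  defines "C \<equiv> D + U * K * transpose_mat U"
  shows "C * transpose_mat C = transpose_mat C * C"
proof -
  define S where "S = U * K * transpose_mat U"
  have S: "S \<in> carrier_mat N N" and Dt: "transpose_mat D \<in> carrier_mat N N"
    unfolding S_def using U K D by auto
  have KUt: "K * transpose_mat U \<in> carrier_mat k N" using K U by auto
  have Ut: "transpose_mat U \<in> carrier_mat k N" using U by auto
  have S_sym: "transpose_mat S = S"
    unfolding S_def transpose_mult[OF mult_carrier_mat[OF U K] Ut] transpose_mult[OF U K] K_sym
    using assoc_mult_mat[OF U K Ut] by simp
  have DS: "D * S = transpose_mat D * S"
    unfolding S_def using assoc_mult_mat[OF D U KUt] assoc_mult_mat[OF Dt U KUt] U K DU DtU by simp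
  have SD: "S * transpose_mat D = S * D"
    using arg_cong[OF DS, of transpose_mat] transpose_mult[OF D S] transpose_mult[OF Dt S] S_sym by simp
  have Ct: "transpose_mat C = transpose_mat D + S"
    unfolding C_def S_def[symmetric] transpose_add[OF D S] S_sym ..
  have "C * transpose_mat C = (D * transpose_mat D + D * S) + (S * transpose_mat D + S * S)"
    unfolding Ct unfolding C_def S_def[symmetric]
    using add_mult_distrib_mat[OF D S add_carrier_mat[OF S, of "transpose_mat D"]] mult_add_distrib_mat[OF D Dt S]
      mult_add_distrib_mat[OF S Dt S] by simp
  also have "\<dots> = (transpose_mat D * D + transpose_mat D * S) + (S * D + S * S)"
    unfolding normal DS SD ..
  also have "\<dots> = transpose_mat C * C"
    unfolding Ct unfolding C_def S_def[symmetric]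
    using add_mult_distrib_mat[OF Dt S add_carrier_mat[OF S, of D]] mult_add_distrib_mat[OF Dt D S]
      mult_add_distrib_mat[OF S D S] by simp
  finally show ?thesis .
qed

section \<open>Block-diagonal matrices\<close>

definition block_diag_mat :: "'a::zero mat \<Rightarrow> 'a mat \<Rightarrow> 'a mat" where
  "block_diag_mat X Y = four_block_mat X (0\<^sub>m (dim_row X) (dim_col Y)) (0\<^sub>m (dim_row Y) (dim_col X)) Y"

lemma dim_block_diag_mat[simp]:
  "dim_row (block_diag_mat X Y) = dim_row X + dim_row Y"
  "dim_col (block_diag_mat X Y) = dim_col X + dim_col Y"
  unfolding block_diag_mat_def by auto

lemma block_diag_mat_carrier[simp]:
  "X \<in> carrier_mat r1 c1 \<Longrightarrow> Y \<in> carrier_mat r2 c2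
    \<Longrightarrow> block_diag_mat X Y \<in> carrier_mat (r1 + r2) (c1 + c2)"
  unfolding carrier_mat_def by auto

lemma index_block_diag_mat:
  assumes "i < dim_row X + dim_row Y" and "j < dim_col X + dim_col Y"
  shows "block_diag_mat X Y $$ (i, j) =
    (if i < dim_row X then if j < dim_col X then X $$ (i, j) else 0
     else if j < dim_col X then 0 else Y $$ (i - dim_row X, j - dim_col X))"
  using assms unfolding block_diag_mat_def by auto

lemma block_diag_mat_mult:
  fixes X :: "'a::semiring_0 mat"
  assumes "X \<in> carrier_mat r1 k1" "Y \<in> carrier_mat r2 k2" "X' \<in> carrier_mat k1 c1" "Y' \<in> carrier_mat k2 c2"
  shows "block_diag_mat X Y * block_diag_mat X' Y' = block_diag_mat (X * X') (Y * Y')"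
  using assms unfolding block_diag_mat_def
  by (subst mult_four_block_mat[of _ r1 k1 _ k2 _ r2]) (auto intro!: cong_four_block_mat)

lemma transpose_block_diag_mat:
  "transpose_mat (block_diag_mat X Y) = block_diag_mat (transpose_mat X) (transpose_mat Y)"
  by (intro eq_matI) (auto simp: index_block_diag_mat)

lemma char_poly_block_diag_mat:
  fixes X :: "'a::idom mat"
  assumes X: "X \<in> carrier_mat a a" and Y: "Y \<in> carrier_mat b b"
  shows "char_poly (block_diag_mat X Y) = char_poly X * char_poly Y"
proof -
  have "char_poly_matrix (block_diag_mat X Y)
      = four_block_mat (char_poly_matrix X) (0\<^sub>m a b) (0\<^sub>m b a) (char_poly_matrix Y)"
    using X Y by (intro eq_matI) (auto simp: char_poly_matrix_def index_block_diag_mat)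
  then show ?thesis
    unfolding char_poly_def using X Y by (simp add: det_four_block_mat_lower_left_zero[of _ a _ b])
qed

definition sym_block_diag_mat :: "'a::zero mat \<Rightarrow> 'a mat \<Rightarrow> 'a mat" where
  "sym_block_diag_mat X Y = block_diag_mat (block_diag_mat X Y) X"

lemma sym_block_diag_mat_carrier[simp]:
  "X \<in> carrier_mat r c \<Longrightarrow> Y \<in> carrier_mat r' c'
    \<Longrightarrow> sym_block_diag_mat X Y \<in> carrier_mat (r + r' + r) (c + c' + c)"
  unfolding sym_block_diag_mat_def by simp

lemma sym_block_diag_mat_mult:
  fixes X :: "'a::semiring_0 mat"
  assumes "X \<in> carrier_mat r k" "Y \<in> carrier_mat r' k'" "X' \<in> carrier_mat k c" "Y' \<in> carrier_mat k' c'"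
  shows "sym_block_diag_mat X Y * sym_block_diag_mat X' Y' = sym_block_diag_mat (X * X') (Y * Y')"
  unfolding sym_block_diag_mat_def using assms
  by (simp add: block_diag_mat_mult[of _ "r + r'" "k + k'" _ r k _ "c + c'" _ c] block_diag_mat_mult[of _ r k _ r' k'])

lemma transpose_sym_block_diag_mat:
  "transpose_mat (sym_block_diag_mat X Y) = sym_block_diag_mat (transpose_mat X) (transpose_mat Y)"
  unfolding sym_block_diag_mat_def by (simp add: transpose_block_diag_mat)

lemma char_poly_sym_block_diag_mat:
  fixes X :: "'a::idom mat"
  assumes "X \<in> carrier_mat r r" "Y \<in> carrier_mat r' r'"
  shows "char_poly (sym_block_diag_mat X Y) = char_poly X * char_poly Y * char_poly X"
  unfolding sym_block_diag_mat_def using assms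
  by (simp add: char_poly_block_diag_mat[of _ "r + r'" _ r] char_poly_block_diag_mat[of _ r _ r'])

lemma char_poly_scalar_mat_1: "char_poly (x \<cdot>\<^sub>m 1\<^sub>m 1) = [:- x, 1 :: 'a::comm_ring_1:]"
  unfolding char_poly_def by (subst det_single) (auto simp: char_poly_matrix_def)

lemma char_poly_sym_block_diag_scalars:
  "char_poly (sym_block_diag_mat (b \<cdot>\<^sub>m 1\<^sub>m 1) (a \<cdot>\<^sub>m 1\<^sub>m 1))
     = [:- b, 1:] * [:- a, 1:] * [:- b, 1 :: 'a::idom:]"
  unfolding char_poly_sym_block_diag_mat[OF smult_carrier_mat[OF one_carrier_mat] smult_carrier_mat[OF one_carrier_mat]]
    char_poly_scalar_mat_1 ..

lemma sym_block_diag_scalars_carrier: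
  "sym_block_diag_mat (b \<cdot>\<^sub>m 1\<^sub>m 1) (a \<cdot>\<^sub>m 1\<^sub>m 1) \<in> carrier_mat 3 3"
  using sym_block_diag_mat_carrier[of "b \<cdot>\<^sub>m 1\<^sub>m 1" 1 1 "a \<cdot>\<^sub>m 1\<^sub>m 1" 1 1] by (simp add: numeral_3_eq_3)

lemma sym_block_diag_mat_one_1: "sym_block_diag_mat (1\<^sub>m 1) (1\<^sub>m 1) = (1\<^sub>m 3 :: 'a::zero_neq_one mat)"
  by (intro eq_matI) (auto simp: sym_block_diag_mat_def index_block_diag_mat)

definition coupling_mat :: "'a::zero \<Rightarrow> 'a \<Rightarrow> 'a mat" where
  "coupling_mat \<rho> \<xi> = mat_of_rows_list 3 [[0, \<rho>, \<xi>], [\<rho>, 0, \<rho>], [\<xi>, \<rho>, 0]]"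

lemma coupling_mat_carrier[simp]: "coupling_mat \<rho> \<xi> \<in> carrier_mat 3 3"
  unfolding coupling_mat_def carrier_mat_def by (simp add: mat_of_rows_list_def)

lemma transpose_coupling_mat: "transpose_mat (coupling_mat \<rho> \<xi>) = coupling_mat \<rho> \<xi>"
  unfolding coupling_mat_def
  by (intro eq_matI) (auto simp: mat_of_rows_list_def less_Suc_eq numeral_3_eq_3)

lemma sym_block_diag_scalars_plus_coupling:
  "sym_block_diag_mat (b \<cdot>\<^sub>m 1\<^sub>m 1) (a \<cdot>\<^sub>m 1\<^sub>m 1) + coupling_mat \<rho> \<xi>
     = mat_of_rows_list 3 [[b, \<rho>, \<xi>], [\<rho>, a, \<rho>], [\<xi>, \<rho>, b :: 'a::comm_ring_1]]"
  by (intro eq_matI)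
    (auto simp: sym_block_diag_mat_def index_block_diag_mat coupling_mat_def mat_of_rows_list_def
      less_Suc_eq numeral_3_eq_3)

lemma mat_of_cols_single_carrier: "mat_of_cols n [v] \<in> carrier_mat n 1"
  using mat_of_cols_carrier[of n "[v]"] by simp

lemma mat_of_cols_eigenvector:
  fixes B :: "'a::comm_ring_1 mat"
  assumes B: "B \<in> carrier_mat n n" and v: "v \<in> carrier_vec n" and Bv: "B *\<^sub>v v = b \<cdot>\<^sub>v v"
  shows "B * mat_of_cols n [v] = mat_of_cols n [v] * (b \<cdot>\<^sub>m 1\<^sub>m 1)"
proof (rule eq_matI)
  fix i j assume "i < dim_row (mat_of_cols n [v] * (b \<cdot>\<^sub>m 1\<^sub>m 1))"
    and "j < dim_col (mat_of_cols n [v] * (b \<cdot>\<^sub>m 1\<^sub>m 1))"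
  then have i: "i < n" and j: "j = 0" by auto
  have "col (mat_of_cols n [v]) 0 = v"
    using v by (intro eq_vecI) (auto simp: mat_of_cols_def)
  then have "(B * mat_of_cols n [v]) $$ (i, j) = (B *\<^sub>v v) $ i"
    using B i j by simp
  also have "\<dots> = (mat_of_cols n [v] * (b \<cdot>\<^sub>m 1\<^sub>m 1)) $$ (i, j)"
    unfolding Bv using v i j by (simp add: scalar_prod_def mat_of_cols_def mult.commute)
  finally show "(B * mat_of_cols n [v]) $$ (i, j) = (mat_of_cols n [v] * (b \<cdot>\<^sub>m 1\<^sub>m 1)) $$ (i, j)" .
qed (use B in auto)

lemma transpose_mat_of_cols_unit:
  fixes v :: "'a::comm_ring_1 vec"
  assumes "v \<in> carrier_vec n" and "v \<bullet> v = 1"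
  shows "transpose_mat (mat_of_cols n [v]) * mat_of_cols n [v] = 1\<^sub>m 1"
  using assms by (intro eq_matI) (auto simp: mat_of_cols_def scalar_prod_def)

lemma sym_block_diag_cols_carrier:
  "sym_block_diag_mat (mat_of_cols n [v]) (mat_of_cols m [u]) \<in> carrier_mat (n + m + n) 3"
  using sym_block_diag_mat_carrier[OF mat_of_cols_single_carrier mat_of_cols_single_carrier, of n v m u]
  by (simp add: numeral_3_eq_3)

lemma sym_block_diag_eigenvector_frame:
  fixes A B :: "'a::comm_ring_1 mat"
  assumes A: "A \<in> carrier_mat m m" and B: "B \<in> carrier_mat n n"
    and u: "u \<in> carrier_vec m" "A *\<^sub>v u = a \<cdot>\<^sub>v u" and v: "v \<in> carrier_vec n" "B *\<^sub>v v = b \<cdot>\<^sub>v v"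
  defines "U \<equiv> sym_block_diag_mat (mat_of_cols n [v]) (mat_of_cols m [u])"
  shows "sym_block_diag_mat B A * U = U * sym_block_diag_mat (b \<cdot>\<^sub>m 1\<^sub>m 1) (a \<cdot>\<^sub>m 1\<^sub>m 1)"
proof -
  note V = mat_of_cols_single_carrier[of n v] and W = mat_of_cols_single_carrier[of m u]
  show ?thesis
    unfolding U_def sym_block_diag_mat_mult[OF B A V W]
      sym_block_diag_mat_mult[OF V W smult_carrier_mat[OF one_carrier_mat] smult_carrier_mat[OF one_carrier_mat]]
      mat_of_cols_eigenvector[OF B v] mat_of_cols_eigenvector[OF A u] ..
qed

lemma transpose_sym_block_diag_cols_unit:
  fixes u v :: "'a::comm_ring_1 vec"
  assumes u: "u \<in> carrier_vec m" "u \<bullet> u = 1" and v: "v \<in> carrier_vec n" "v \<bullet> v = 1"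
  defines "U \<equiv> sym_block_diag_mat (mat_of_cols n [v]) (mat_of_cols m [u])"
  shows "transpose_mat U * U = 1\<^sub>m 3"
proof -
  note V = mat_of_cols_single_carrier[of n v] and W = mat_of_cols_single_carrier[of m u]
  show ?thesis
    unfolding U_def transpose_sym_block_diag_mat
      sym_block_diag_mat_mult[OF transpose_carrier_mat[THEN iffD2, OF V] transpose_carrier_mat[THEN iffD2, OF W] V W]
      transpose_mat_of_cols_unit[OF v] transpose_mat_of_cols_unit[OF u]
    by (rule sym_block_diag_mat_one_1)
qed

section \<open>Exchange matrix, centrosymmetry and nonnegativity of block matrices\<close>

lemma outer_carrier[simp]:
  "x \<in> carrier_vec m \<Longrightarrow> y \<in> carrier_vec n \<Longrightarrow> outer x y \<in> carrier_mat m n"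
  unfolding outer_def by auto

lemma dim_exch_mat[simp]: "dim_row (exch_mat r) = r" "dim_col (exch_mat r) = r"
  unfolding exch_mat_def by auto

lemma exch_mat_carrier[simp]: "exch_mat r \<in> carrier_mat r r"
  unfolding carrier_mat_def by auto

lemma index_exch_mult:
  fixes M :: "'a::comm_ring_1 mat"
  assumes "M \<in> carrier_mat r c" and "i < r" and "j < c"
  shows "(exch_mat r * M) $$ (i, j) = M $$ (r - 1 - i, j)"
proof -
  have "(exch_mat r * M) $$ (i, j) = (\<Sum>t = 0..<r. (if i + t = r - 1 then 1 else 0) * M $$ (t, j))"
    using assms by (simp add: exch_mat_def scalar_prod_def)
  also have "\<dots> = (\<Sum>t = 0..<r. if t = r - 1 - i then M $$ (t, j) else 0)"
    using assms by (intro sum.cong) auto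
  finally show ?thesis using assms by simp
qed

lemma index_mult_exch:
  fixes M :: "'a::comm_ring_1 mat"
  assumes "M \<in> carrier_mat r c" and "i < r" and "j < c"
  shows "(M * exch_mat c) $$ (i, j) = M $$ (i, c - 1 - j)"
proof -
  have "(M * exch_mat c) $$ (i, j) = (\<Sum>t = 0..<c. M $$ (i, t) * (if t + j = c - 1 then 1 else 0))"
    using assms by (simp add: exch_mat_def scalar_prod_def)
  also have "\<dots> = (\<Sum>t = 0..<c. if t = c - 1 - j then M $$ (i, t) else 0)"
    using assms by (intro sum.cong) auto
  finally show ?thesis using assms by simp
qed

lemma index_exch_mult_exch:
  fixes M :: "'a::comm_ring_1 mat"
  assumes "M \<in> carrier_mat r c" and "i < r" and "j < c"
  shows "(exch_mat r * M * exch_mat c) $$ (i, j) = M $$ (r - 1 - i, c - 1 - j)"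
proof -
  have "(exch_mat r * M * exch_mat c) $$ (i, j) = (exch_mat r * M) $$ (i, c - 1 - j)"
    by (rule index_mult_exch[OF mult_carrier_mat[OF exch_mat_carrier assms(1)] assms(2,3)])
  also have "\<dots> = M $$ (r - 1 - i, c - 1 - j)"
    using assms by (intro index_exch_mult) auto
  finally show ?thesis .
qed

lemma index_exch_mult_vec:
  fixes x :: "'a::comm_ring_1 vec"
  assumes "x \<in> carrier_vec r" and "i < r"
  shows "(exch_mat r *\<^sub>v x) $ i = x $ (r - 1 - i)"
proof -
  have "(exch_mat r *\<^sub>v x) $ i = (\<Sum>t = 0..<r. (if i + t = r - 1 then 1 else 0) * x $ t)"
    using assms by (simp add: exch_mat_def scalar_prod_def)
  also have "\<dots> = (\<Sum>t = 0..<r. if t = r - 1 - i then x $ t else 0)"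
    using assms by (intro sum.cong) auto
  finally show ?thesis using assms by simp
qed

lemma exch_smult_outer_exch:
  fixes x y :: "'a::comm_ring_1 vec"
  assumes x: "x \<in> carrier_vec m" and y: "y \<in> carrier_vec n"
  shows "exch_mat m * (c \<cdot>\<^sub>m outer x y) * exch_mat n
       = c \<cdot>\<^sub>m outer (exch_mat m *\<^sub>v x) (exch_mat n *\<^sub>v y)"
proof -
  have M: "c \<cdot>\<^sub>m outer x y \<in> carrier_mat m n" using x y by (auto simp: outer_def)
  show ?thesis
  proof (rule eq_matI)
    fix i j assume "i < dim_row (c \<cdot>\<^sub>m outer (exch_mat m *\<^sub>v x) (exch_mat n *\<^sub>v y))"
      and "j < dim_col (c \<cdot>\<^sub>m outer (exch_mat m *\<^sub>v x) (exch_mat n *\<^sub>v y))"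
    then have i: "i < m" and j: "j < n" by (auto simp: outer_def)
    show "(exch_mat m * (c \<cdot>\<^sub>m outer x y) * exch_mat n) $$ (i, j)
        = (c \<cdot>\<^sub>m outer (exch_mat m *\<^sub>v x) (exch_mat n *\<^sub>v y)) $$ (i, j)"
      unfolding index_exch_mult_exch[OF M i j] using x y i j
      by (simp add: outer_def index_exch_mult_vec[OF x i] index_exch_mult_vec[OF y j])
  qed (use M in \<open>auto simp: outer_def\<close>)
qed

lemma exch_smult_outer_exch_fixed:
  fixes x y :: "'a::comm_ring_1 vec"
  assumes "x \<in> carrier_vec m" "y \<in> carrier_vec n" "exch_mat m *\<^sub>v x = x" "exch_mat n *\<^sub>v y = y"
  shows "exch_mat m * (c \<cdot>\<^sub>m outer x y) * exch_mat n = c \<cdot>\<^sub>m outer x y"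
  using exch_smult_outer_exch[OF assms(1,2)] assms(3,4) by simp

lemma three_segment_cases:
  fixes i i' r r' :: nat
  assumes "i < r + r' + r" and "i' = r + r' + r - 1 - i"
  obtains p q where "i = p" "i' = r + r' + q" "p < r" "q < r" "r - 1 - p = q"
    | p q where "i = r + p" "i' = r + q" "p < r'" "q < r'" "r' - 1 - p = q"
    | p q where "i = r + r' + p" "i' = q" "p < r" "q < r" "r - 1 - p = q"
proof -
  consider "i < r" | "r \<le> i" "i < r + r'" | "r + r' \<le> i" by linarith
  then show ?thesis
  proof cases
    case 1
    then show ?thesis using that(1)[of i "r - 1 - i"] assms by simp
  next
    case 2
    then show ?thesis using that(2)[of "i - r" "r + r' - 1 - i"] assms by simp
  next
    case 3
    then show ?thesis using that(3)[of "i - r - r'" "r + r' + r - 1 - i"] assms by simp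
  qed
qed

lemma exch_block3_exch:
  fixes M11 :: "'a::comm_ring_1 mat"
  assumes "M11 \<in> carrier_mat r c" "M12 \<in> carrier_mat r c'" "M13 \<in> carrier_mat r c"
    "M21 \<in> carrier_mat r' c" "M22 \<in> carrier_mat r' c'" "M23 \<in> carrier_mat r' c"
    "M31 \<in> carrier_mat r c" "M32 \<in> carrier_mat r c'" "M33 \<in> carrier_mat r c"
  shows "exch_mat (r + r' + r) * block3 M11 M12 M13 M21 M22 M23 M31 M32 M33 * exch_mat (c + c' + c)
       = block3
          (exch_mat r * M33 * exch_mat c) (exch_mat r * M32 * exch_mat c') (exch_mat r * M31 * exch_mat c)
          (exch_mat r' * M23 * exch_mat c) (exch_mat r' * M22 * exch_mat c') (exch_mat r' * M21 * exch_mat c)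
          (exch_mat r * M13 * exch_mat c) (exch_mat r * M12 * exch_mat c') (exch_mat r * M11 * exch_mat c)"
    (is "_ * ?M * _ = ?M'")
proof -
  have M: "?M \<in> carrier_mat (r + r' + r) (c + c' + c)" using assms by (simp add: block3_def)
  show ?thesis
  proof (rule eq_matI)
    fix i j assume "i < dim_row ?M'" and "j < dim_col ?M'"
    then have i: "i < r + r' + r" and j: "j < c + c' + c" using assms by (auto simp: block3_def Let_def)
    define i' where "i' = r + r' + r - 1 - i"
    define j' where "j' = c + c' + c - 1 - j"
    show "(exch_mat (r + r' + r) * ?M * exch_mat (c + c' + c)) $$ (i, j) = ?M' $$ (i, j)"
      unfolding index_exch_mult_exch[OF M i j] i'_def[symmetric] j'_def[symmetric]
      by (rule three_segment_cases[OF i i'_def]; rule three_segment_cases[OF j j'_def];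
          simp add: assms assms[THEN carrier_matD(1)] assms[THEN carrier_matD(2)] block3_def Let_def
            index_exch_mult_exch del: index_mult_mat(1))
  qed (use assms in \<open>auto simp: block3_def Let_def\<close>)
qed

lemma centrosymmetric_block3:
  fixes X :: "'a::comm_ring_1 mat"
  assumes X: "X \<in> carrier_mat r r" and Y: "Y \<in> carrier_mat r r'" and Z: "Z \<in> carrier_mat r r"
    and W: "W \<in> carrier_mat r' r" and A: "A \<in> carrier_mat r' r'"
    and "exch_mat r * X * exch_mat r = X" "exch_mat r * Y * exch_mat r' = Y"
      "exch_mat r * Z * exch_mat r = Z" "exch_mat r' * W * exch_mat r = W"
      "exch_mat r' * A * exch_mat r' = A"
  shows "centrosymmetric (block3 X Y Z W A W Z Y X)"
proof -
  have "block3 X Y Z W A W Z Y X \<in> carrier_mat (r + r' + r) (r + r' + r)"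
    using X A by (simp add: block3_def)
  then show ?thesis
    unfolding centrosymmetric_def using exch_block3_exch[OF X Y Z W A W Z Y X] assms(6-) by simp
qed

lemma nonneg_block3:
  assumes "M11 \<in> carrier_mat r1 c1" "M12 \<in> carrier_mat r1 c2" "M13 \<in> carrier_mat r1 c3"
    "M21 \<in> carrier_mat r2 c1" "M22 \<in> carrier_mat r2 c2" "M23 \<in> carrier_mat r2 c3"
    "M31 \<in> carrier_mat r3 c1" "M32 \<in> carrier_mat r3 c2" "M33 \<in> carrier_mat r3 c3"
    and "nonneg_mat M11" "nonneg_mat M12" "nonneg_mat M13" "nonneg_mat M21" "nonneg_mat M22"
      "nonneg_mat M23" "nonneg_mat M31" "nonneg_mat M32" "nonneg_mat M33"
  shows "nonneg_mat (block3 M11 M12 M13 M21 M22 M23 M31 M32 M33)"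
  using assms unfolding nonneg_mat_def block3_def Let_def by auto

lemma nonneg_smult_outer:
  assumes "c \<ge> 0" "nonneg_vec x" "nonneg_vec y"
  shows "nonneg_mat (c \<cdot>\<^sub>m outer x y)"
  using assms unfolding nonneg_mat_def nonneg_vec_def outer_def by auto

section \<open>The coupled matrix\<close>

lemma index_mult_mult_transpose_single_entry_rows:
  fixes U :: "'a::comm_semiring_0 mat"
  assumes U: "U \<in> carrier_mat N k" and K: "K \<in> carrier_mat k k" and i: "i < N" and j: "j < N"
    and rows: "\<And>i p. i < N \<Longrightarrow> p < k \<Longrightarrow> U $$ (i, p) = (if p = f i then w i else 0)"
    and f: "\<And>i. i < N \<Longrightarrow> f i < k"
  shows "(U * K * transpose_mat U) $$ (i, j) = w i * K $$ (f i, f j) * w j"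
proof -
  have row_UK: "(\<Sum>p = 0..<k. (if p = f i then w i else 0) * K $$ (p, q)) = w i * K $$ (f i, q)" for q
    using f[OF i] by (simp add: if_distrib[of "\<lambda>x. x * _"] cong: if_cong)
  have "(U * K * transpose_mat U) $$ (i, j)
      = (\<Sum>q = 0..<k. (\<Sum>p = 0..<k. (if p = f i then w i else 0) * K $$ (p, q)) * (if q = f j then w j else 0))"
    using U K i j by (simp add: scalar_prod_def rows del: assoc_mult_mat)
  also have "\<dots> = w i * K $$ (f i, f j) * w j"
    unfolding row_UK using f[OF j] by (simp add: if_distrib[of "\<lambda>x. _ * x"] cong: if_cong)
  finally show ?thesis .
qed

definition segment3 :: "nat \<Rightarrow> nat \<Rightarrow> nat \<Rightarrow> nat" where
  "segment3 r r' i = (if i < r then 0 else if i < r + r' then 1 else 2)"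

lemma index_sym_block_diag_cols:
  assumes v: "v \<in> carrier_vec n" and u: "u \<in> carrier_vec m" and i: "i < n + m + n" and p: "p < 3"
  shows "sym_block_diag_mat (mat_of_cols n [v]) (mat_of_cols m [u]) $$ (i, p)
    = (if p = segment3 n m i then (if i < n then v $ i else if i < n + m then u $ (i - n) else v $ (i - n - m))
       else 0)"
  using v u i p
  by (auto simp: sym_block_diag_mat_def index_block_diag_mat mat_of_cols_def segment3_def less_Suc_eq numeral_3_eq_3)

lemma block3_outer_decomposition:
  fixes A B :: "'a::comm_ring_1 mat"
  assumes A: "A \<in> carrier_mat m m" and B: "B \<in> carrier_mat n n"
    and u: "u \<in> carrier_vec m" and v: "v \<in> carrier_vec n"
  defines "U \<equiv> sym_block_diag_mat (mat_of_cols n [v]) (mat_of_cols m [u])"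
  shows "block3 B (\<rho> \<cdot>\<^sub>m outer v u) (\<xi> \<cdot>\<^sub>m outer v v) (\<rho> \<cdot>\<^sub>m outer u v) A (\<rho> \<cdot>\<^sub>m outer u v)
      (\<xi> \<cdot>\<^sub>m outer v v) (\<rho> \<cdot>\<^sub>m outer v u) B
    = sym_block_diag_mat B A + U * coupling_mat \<rho> \<xi> * transpose_mat U"
    (is "?C = ?D + _")
proof -
  have U: "U \<in> carrier_mat (n + m + n) 3" unfolding U_def by (rule sym_block_diag_cols_carrier)
  note dims = carrier_matD[OF A] carrier_matD[OF B] carrier_vecD[OF u] carrier_vecD[OF v]
  show ?thesis
  proof (rule eq_matI)
    fix i j assume "i < dim_row (?D + U * coupling_mat \<rho> \<xi> * transpose_mat U)"
      and "j < dim_col (?D + U * coupling_mat \<rho> \<xi> * transpose_mat U)"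
    then have i: "i < n + m + n" and j: "j < n + m + n" using U by auto
    have UKU: "(U * coupling_mat \<rho> \<xi> * transpose_mat U) $$ (i, j)
      = (if i < n then v $ i else if i < n + m then u $ (i - n) else v $ (i - n - m))
        * coupling_mat \<rho> \<xi> $$ (segment3 n m i, segment3 n m j)
        * (if j < n then v $ j else if j < n + m then u $ (j - n) else v $ (j - n - m))"
      by (rule index_mult_mult_transpose_single_entry_rows[OF U coupling_mat_carrier i j])
        (auto simp: U_def index_sym_block_diag_cols[OF v u] segment3_def)
    have entry: "(?D + U * coupling_mat \<rho> \<xi> * transpose_mat U) $$ (i, j)
        = ?D $$ (i, j) + (U * coupling_mat \<rho> \<xi> * transpose_mat U) $$ (i, j)"
      using U i j by simp
    show "?C $$ (i, j) = (?D + U * coupling_mat \<rho> \<xi> * transpose_mat U) $$ (i, j)"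
      unfolding entry UKU
      by (rule three_segment_cases[OF i refl]; rule three_segment_cases[OF j refl];
          simp add: dims Let_def sym_block_diag_mat_def block3_def index_block_diag_mat outer_def coupling_mat_def
            mat_of_rows_list_def segment3_def)
  qed (use A B U in \<open>auto simp: block3_def sym_block_diag_mat_def outer_def\<close>)
qed

lemma normal_perron_coupling:
  fixes A B :: "real mat"
  assumes A: "A \<in> carrier_mat m m" and B: "B \<in> carrier_mat n n"
    and A_normal: "A * transpose_mat A = transpose_mat A * A"
    and B_normal: "B * transpose_mat B = transpose_mat B * B"
    and u: "u \<in> carrier_vec m" "A *\<^sub>v u = a \<cdot>\<^sub>v u" and v: "v \<in> carrier_vec n" "B *\<^sub>v v = b \<cdot>\<^sub>v v"
  defines "U \<equiv> sym_block_diag_mat (mat_of_cols n [v]) (mat_of_cols m [u])"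
  shows "normal_mat (sym_block_diag_mat B A + U * coupling_mat \<rho> \<xi> * transpose_mat U)"
proof -
  define D where "D = sym_block_diag_mat B A"
  have At: "transpose_mat A \<in> carrier_mat m m" and Bt: "transpose_mat B \<in> carrier_mat n n"
    using A B by simp_all
  have D: "D \<in> carrier_mat (n + m + n) (n + m + n)" unfolding D_def using A B by simp
  have U: "U \<in> carrier_mat (n + m + n) 3" unfolding U_def by (rule sym_block_diag_cols_carrier)
  have "D * transpose_mat D = transpose_mat D * D"
    unfolding D_def transpose_sym_block_diag_mat
    by (simp add: sym_block_diag_mat_mult[OF B A Bt At] sym_block_diag_mat_mult[OF Bt At B A]
        A_normal B_normal)
  moreover have "transpose_mat D * U = U * sym_block_diag_mat (b \<cdot>\<^sub>m 1\<^sub>m 1) (a \<cdot>\<^sub>m 1\<^sub>m 1)"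
    unfolding D_def transpose_sym_block_diag_mat U_def
    using normal_transpose_eigenvector[OF A A_normal u] normal_transpose_eigenvector[OF B B_normal v]
    by (rule sym_block_diag_eigenvector_frame[OF At Bt u(1) _ v(1)])
  ultimately show ?thesis
    using normal_low_rank_update[OF D U sym_block_diag_scalars_carrier coupling_mat_carrier _
        sym_block_diag_eigenvector_frame[OF A B u v, folded D_def U_def] _ transpose_coupling_mat] D
    unfolding normal_mat_real_iff D_def by simp
qed

interpretation of_real_poly_hom: map_poly_comm_ring_hom "complex_of_real" ..

lemma char_poly_of_has_eigenvalues:
  assumes "A \<in> carrier_mat n n" and "has_eigenvalues A ls"
  shows "map_poly complex_of_real (char_poly A) = (\<Prod>x\<leftarrow>ls. [:- x, 1:])"
  using assms unfolding has_eigenvalues_def by (simp add: of_real_hom.char_poly_hom)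

lemma has_eigenvalues_deflation:
  fixes A B C Ch :: "real mat"
  assumes A: "A \<in> carrier_mat m m" and B: "B \<in> carrier_mat n n"
    and C: "C \<in> carrier_mat (n + m + n) (n + m + n)" and Ch: "Ch \<in> carrier_mat 3 3"
    and char: "char_poly C * ([:- b, 1:] * [:- a, 1:] * [:- b, 1:])
      = char_poly B * char_poly A * char_poly B * char_poly Ch"
    and A_eig: "has_eigenvalues A (complex_of_real a # as)"
    and B_eig: "has_eigenvalues B (complex_of_real b # bs)"
    and Ch_eig: "has_eigenvalues Ch gs"
  shows "has_eigenvalues C (gs @ as @ bs @ bs)"
  unfolding has_eigenvalues_def
proof
  show "length (gs @ as @ bs @ bs) = dim_row C"
    using A B C Ch A_eig B_eig Ch_eig unfolding has_eigenvalues_def by auto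
  define \<chi> where "\<chi> xs = (\<Prod>x\<leftarrow>xs. [:- x, 1:])" for xs :: "complex list"
  define lin where "lin x = [:- complex_of_real x, 1:]" for x
  have hom_lin: "map_poly complex_of_real [:- x, 1:] = lin x" for x unfolding lin_def by simp
  have "map_poly complex_of_real (char_poly A) = lin a * \<chi> as"
    "map_poly complex_of_real (char_poly B) = lin b * \<chi> bs"
    "map_poly complex_of_real (char_poly Ch) = \<chi> gs"
    using char_poly_of_has_eigenvalues[OF A A_eig] char_poly_of_has_eigenvalues[OF B B_eig]
      char_poly_of_has_eigenvalues[OF Ch Ch_eig]
    unfolding \<chi>_def lin_def by simp_all
  then have "map_poly complex_of_real (char_poly C) * (lin b * lin a * lin b)
      = (lin b * \<chi> bs) * (lin a * \<chi> as) * (lin b * \<chi> bs) * \<chi> gs"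
    using arg_cong[OF char, of "map_poly complex_of_real"] unfolding of_real_poly_hom.hom_mult hom_lin
    by simp
  also have "\<dots> = \<chi> (gs @ as @ bs @ bs) * (lin b * lin a * lin b)"
    unfolding \<chi>_def by (simp only: map_append prod_list.append ac_simps)
  finally have "map_poly complex_of_real (char_poly C) = \<chi> (gs @ as @ bs @ bs)"
    by (rule mult_right_cancel[THEN iffD1, rotated]) (simp add: lin_def)
  then show "char_poly (map_mat complex_of_real C) = (\<Prod>x\<leftarrow>gs @ as @ bs @ bs. [:- x, 1:])"
    unfolding \<chi>_def by (simp add: of_real_hom.char_poly_hom[OF C])
qed

lemma has_eigenvalues_perron_coupling:
  fixes A B :: "real mat"
  assumes A: "A \<in> carrier_mat m m" and B: "B \<in> carrier_mat n n"
    and u: "u \<in> carrier_vec m" "u \<bullet> u = 1" "A *\<^sub>v u = a \<cdot>\<^sub>v u"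
    and v: "v \<in> carrier_vec n" "v \<bullet> v = 1" "B *\<^sub>v v = b \<cdot>\<^sub>v v"
    and A_eig: "has_eigenvalues A (complex_of_real a # as)"
    and B_eig: "has_eigenvalues B (complex_of_real b # bs)"
    and C_hat_eig: "has_eigenvalues (mat_of_rows_list 3 [[b, \<rho>, \<xi>], [\<rho>, a, \<rho>], [\<xi>, \<rho>, b]]) gs"
  defines "U \<equiv> sym_block_diag_mat (mat_of_cols n [v]) (mat_of_cols m [u])"
  shows "has_eigenvalues (sym_block_diag_mat B A + U * coupling_mat \<rho> \<xi> * transpose_mat U) (gs @ as @ bs @ bs)"
proof -
  define C where "C = sym_block_diag_mat B A + U * coupling_mat \<rho> \<xi> * transpose_mat U"
  have D: "sym_block_diag_mat B A \<in> carrier_mat (n + m + n) (n + m + n)" using A B by simp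
  have U: "U \<in> carrier_mat (n + m + n) 3" unfolding U_def by (rule sym_block_diag_cols_carrier)
  have "U * coupling_mat \<rho> \<xi> * transpose_mat U \<in> carrier_mat (n + m + n) (n + m + n)"
    by (rule mult_carrier_mat[OF mult_carrier_mat[OF U coupling_mat_carrier] transpose_carrier_mat[THEN iffD2, OF U]])
  then have C: "C \<in> carrier_mat (n + m + n) (n + m + n)" unfolding C_def by (rule add_carrier_mat)
  have "char_poly C * char_poly (sym_block_diag_mat (b \<cdot>\<^sub>m 1\<^sub>m 1) (a \<cdot>\<^sub>m 1\<^sub>m 1))
      = char_poly (sym_block_diag_mat B A)
        * char_poly (sym_block_diag_mat (b \<cdot>\<^sub>m 1\<^sub>m 1) (a \<cdot>\<^sub>m 1\<^sub>m 1) + coupling_mat \<rho> \<xi>)"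
    unfolding C_def U_def
    by (rule char_poly_low_rank_update[OF D sym_block_diag_cols_carrier
        sym_block_diag_scalars_carrier coupling_mat_carrier sym_block_diag_eigenvector_frame[OF A B u(1,3) v(1,3)]
        transpose_sym_block_diag_cols_unit[OF u(1,2) v(1,2)]])
  then have "char_poly C * ([:- b, 1:] * [:- a, 1:] * [:- b, 1:])
      = char_poly B * char_poly A * char_poly B * char_poly (mat_of_rows_list 3 [[b, \<rho>, \<xi>], [\<rho>, a, \<rho>], [\<xi>, \<rho>, b]])"
    unfolding char_poly_sym_block_diag_scalars sym_block_diag_scalars_plus_coupling
      char_poly_sym_block_diag_mat[OF B A] .
  moreover have "mat_of_rows_list 3 [[b, \<rho>, \<xi>], [\<rho>, a, \<rho>], [\<xi>, \<rho>, b]] \<in> carrier_mat 3 3"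
    unfolding carrier_mat_def by (simp add: mat_of_rows_list_def)
  ultimately show ?thesis
    using has_eigenvalues_deflation[OF A B C _ _ A_eig B_eig C_hat_eig] unfolding C_def by blast
qed

theorem lemma3p5:
  fixes A B :: "real mat" and m n :: nat
    and \<alpha> :: "nat \<Rightarrow> complex" and \<beta> :: "nat \<Rightarrow> complex" and \<gamma> :: "nat \<Rightarrow> complex"
    and u v :: "real vec" and \<rho> \<xi> :: real
  assumes A: "A \<in> carrier_mat m m" "m \<ge> 1"
    and A_props: "normal_mat A" "centrosymmetric A" "nonneg_mat A"
    and A_eig: "has_eigenvalues A (map \<alpha> [0..<m])"
    and A_perron: "\<alpha> 0 = complex_of_real (perron_root A)"
    and u: "u \<in> carrier_vec m" "u \<bullet> u = 1" "nonneg_vec u"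
       "A *\<^sub>v u = perron_root A \<cdot>\<^sub>v u" "exch_mat m *\<^sub>v u = u"
    and B: "B \<in> carrier_mat n n" "n \<ge> 1"
    and B_props: "normal_mat B" "centrosymmetric B" "nonneg_mat B"
    and B_eig: "has_eigenvalues B (map \<beta> [0..<n])"
    and B_perron: "\<beta> 0 = complex_of_real (perron_root B)"
    and v: "v \<in> carrier_vec n" "v \<bullet> v = 1" "nonneg_vec v"
       "B *\<^sub>v v = perron_root B \<cdot>\<^sub>v v" "exch_mat n *\<^sub>v v = v"
    and \<rho>\<xi>: "\<rho> \<ge> 0" "\<xi> \<ge> 0"
    and C_hat_eig: "has_eigenvalues
       (mat_of_rows_list 3
         [[perron_root B, \<rho>, \<xi>],
          [\<rho>, perron_root A, \<rho>],
          [\<xi>, \<rho>, perron_root B]])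
       [\<gamma> 0, \<gamma> 1, \<gamma> 2]"
  defines "C \<equiv> block3
       B (\<rho> \<cdot>\<^sub>m outer v u) (\<xi> \<cdot>\<^sub>m outer v v)
       (\<rho> \<cdot>\<^sub>m outer u v) A (exch_mat m * (\<rho> \<cdot>\<^sub>m outer u v) * exch_mat n)
       (\<xi> \<cdot>\<^sub>m outer v v) (\<rho> \<cdot>\<^sub>m outer v u) B"
  shows "normal_mat C \<and> centrosymmetric C \<and> nonneg_mat C \<and>
    has_eigenvalues C
      ([\<gamma> 0, \<gamma> 1, \<gamma> 2] @ map \<alpha> [1..<m] @ map \<beta> [1..<n] @ map \<beta> [1..<n])"
proof -
  define U where "U = sym_block_diag_mat (mat_of_cols n [v]) (mat_of_cols m [u])"
  have exch: "exch_mat m * (\<rho> \<cdot>\<^sub>m outer u v) * exch_mat n = \<rho> \<cdot>\<^sub>m outer u v"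
    by (rule exch_smult_outer_exch_fixed[OF u(1) v(1) u(5) v(5)])
  have C_eq: "C = sym_block_diag_mat B A + U * coupling_mat \<rho> \<xi> * transpose_mat U"
    unfolding C_def exch U_def by (rule block3_outer_decomposition[OF A(1) B(1) u(1) v(1)])
  have A_eig': "has_eigenvalues A (complex_of_real (perron_root A) # map \<alpha> [1..<m])"
    and B_eig': "has_eigenvalues B (complex_of_real (perron_root B) # map \<beta> [1..<n])"
    using A_eig B_eig A(2) B(2) unfolding A_perron[symmetric] B_perron[symmetric]
    by (simp_all add: upt_conv_Cons)
  have "A * transpose_mat A = transpose_mat A * A" "B * transpose_mat B = transpose_mat B * B"
    using A_props(1) B_props(1) unfolding normal_mat_real_iff by simp_all
  then have "normal_mat C"
    unfolding C_eq U_def by (rule normal_perron_coupling[OF A(1) B(1) _ _ u(1,4) v(1,4)])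
  moreover have "centrosymmetric C"
    unfolding C_def exch
    by (rule centrosymmetric_block3) (use A B u v A_props(2) B_props(2) in
      \<open>auto simp: centrosymmetric_def exch_smult_outer_exch_fixed\<close>)
  moreover have "nonneg_mat C"
    unfolding C_def exch
    by (rule nonneg_block3) (use A B u v A_props(3) B_props(3) \<rho>\<xi> in \<open>auto simp: nonneg_smult_outer\<close>)
  moreover have "has_eigenvalues C ([\<gamma> 0, \<gamma> 1, \<gamma> 2] @ map \<alpha> [1..<m] @ map \<beta> [1..<n] @ map \<beta> [1..<n])"
    unfolding C_eq U_def using A_eig' B_eig'
    by (rule has_eigenvalues_perron_coupling[OF A(1) B(1) u(1,2,4) v(1,2,4) _ _ C_hat_eig])
  ultimately show ?thesis by blast
qed

end
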